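(* Let $d=2$ and let costs be Euclidean. For any constant $M>0$, there exist two linear classifiers $h_1,h_2:\mathbb R^2\to\{0,1\}$ and an initial feature vector $x^{(0)}\in\mathbb R^2$ such that $$\frac{c^*_{\mathrm{conj}}(x^{(0)},\{h_1,h_2\})}{c^*_{\mathrm{seq}}(x^{(0)},\{h_1,h_2\})}\ge M.$$
   Context: A linear classifier is $h(x)=\mathbf 1[w^\top x\ge b]$. For classifiers $h_1,\dots,h_k$ and cost $c(x,\hat x)=\|\hat x-x\|_2$: the sequential manipulation cost is $c^*_{\mathrm{seq}}(x^{(0)},\{h_1,\dots,h_k\})=\min\{\sum_{i=0}^{k-1}c(x^{(i)},x^{(i+1)}):x^{(1)},\dots,x^{(k)}\text{ with }h_i(x^{(i)})=1\ \forall i\}$; the conjunction manipulation cost is $c^*_{\mathrm{conj}}(x,\{h_1,\dots,h_k\})=\min\{c(x,z):h_i(z)=1\ \forall i\}$. *)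

theory Defs
  imports "HOL-Analysis.Analysis"
begin

definition lin_clf :: "real^'n \<Rightarrow> real \<Rightarrow> real^'n \<Rightarrow> nat" where
  "lin_clf w b x = (if w \<bullet> x \<ge> b then 1 else 0)"

definition cost :: "real^'n \<Rightarrow> real^'n \<Rightarrow> real" where
  "cost x x' = norm (x' - x)"

definition seq_cost :: "real^'n \<Rightarrow> (real^'n \<Rightarrow> nat) list \<Rightarrow> real" where
  "seq_cost x0 hs = Inf {(\<Sum>i<length hs. cost (x i) (x (Suc i))) | x.
      x 0 = x0 \<and> (\<forall>i\<in>{1..length hs}. (hs ! (i - 1)) (x i) = 1)}"

definition conj_cost :: "real^'n \<Rightarrow> (real^'n \<Rightarrow> nat) list \<Rightarrow> real" where
  "conj_cost x0 hs = Inf {cost x0 z | z. \<forall>h\<in>set hs. h z = 1}"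

end

theory Submission
  imports Defs
begin

text \<open>Take \<open>h\<^sub>1 = 1[z\<^sub>1 \<ge> 0]\<close>, \<open>h\<^sub>2 = 1[z\<^sub>2 - M z\<^sub>1 \<ge> 1]\<close> and \<open>x\<^sub>0 = 0\<close>.
  Every point accepted by both has \<open>z\<^sub>2 \<ge> 1\<close>, so the conjunction cost is at least 1.
  Sequentially, \<open>x\<^sub>0\<close> itself already passes \<open>h\<^sub>1\<close>, and the agent may then leave the
  region of \<open>h\<^sub>1\<close> to reach \<open>(-1/M, 0)\<close>, which passes \<open>h\<^sub>2\<close>; this costs only \<open>1/M\<close>.
  The sequential cost is positive: by the triangle inequality it is at least the distance from
  \<open>x\<^sub>0\<close> to the half-plane of \<open>h\<^sub>2\<close>.\<close>

lemma cost_nonneg: "0 \<le> cost x z"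
  by (simp add: cost_def)

lemma lin_clf_accept_cost_ge:
  assumes "lin_clf w b z = 1"
  shows "b - w \<bullet> x \<le> norm w * cost x z"
proof -
  have "b - w \<bullet> x \<le> w \<bullet> (z - x)"
    using assms by (simp add: lin_clf_def inner_diff_right split: if_splits)
  also have "\<dots> \<le> norm w * norm (z - x)"
    by (rule norm_cauchy_schwarz)
  finally show ?thesis
    by (simp add: cost_def)
qed

lemma conj_cost_ge:
  assumes "\<exists>z. \<forall>h\<in>set hs. h z = 1"
    and "\<And>z. \<forall>h\<in>set hs. h z = 1 \<Longrightarrow> c \<le> cost x0 z"
  shows "c \<le> conj_cost x0 hs"
  unfolding conj_cost_def using assms by (intro cInf_greatest) auto

definition seq_paths :: "real^'n \<Rightarrow> (real^'n \<Rightarrow> nat) list \<Rightarrow> (nat \<Rightarrow> real^'n) set" where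
  "seq_paths x0 hs = {x. x 0 = x0 \<and> (\<forall>i\<in>{1..length hs}. (hs ! (i - 1)) (x i) = 1)}"

definition path_cost :: "(real^'n \<Rightarrow> nat) list \<Rightarrow> (nat \<Rightarrow> real^'n) \<Rightarrow> real" where
  "path_cost hs x = (\<Sum>i<length hs. cost (x i) (x (Suc i)))"

lemma seq_cost_eq_Inf_path_cost: "seq_cost x0 hs = Inf (path_cost hs ` seq_paths x0 hs)"
  unfolding seq_cost_def seq_paths_def path_cost_def by (simp add: setcompr_eq_image)

lemma seq_cost_le:
  assumes "x \<in> seq_paths x0 hs"
  shows "seq_cost x0 hs \<le> path_cost hs x"
  unfolding seq_cost_eq_Inf_path_cost
proof (rule cInf_lower)
  show "path_cost hs x \<in> path_cost hs ` seq_paths x0 hs"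
    using assms by blast
  show "bdd_below (path_cost hs ` seq_paths x0 hs)"
    by (rule bdd_belowI[where m = 0]) (auto simp: path_cost_def intro: sum_nonneg cost_nonneg)
qed

lemma cost_le_path_cost: "cost (x 0) (x (length hs)) \<le> path_cost hs x"
proof -
  have "cost (x 0) (x (length hs)) = norm (\<Sum>i<length hs. x (Suc i) - x i)"
    by (simp add: cost_def sum_lessThan_telescope)
  also have "\<dots> \<le> (\<Sum>i<length hs. norm (x (Suc i) - x i))"
    by (rule norm_sum)
  finally show ?thesis
    by (simp add: cost_def path_cost_def)
qed

lemma seq_cost_ge:
  assumes "hs \<noteq> []" and feasible: "\<forall>h\<in>set hs. \<exists>z. h z = 1"
    and "\<And>z. last hs z = 1 \<Longrightarrow> c \<le> cost x0 z"
  shows "c \<le> seq_cost x0 hs"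
  unfolding seq_cost_eq_Inf_path_cost
proof (rule cInf_greatest)
  define x where "x i = (if i = 0 then x0 else SOME z. (hs ! (i - 1)) z = 1)" for i
  have "(hs ! (i - 1)) (x i) = 1" if "i \<in> {1..length hs}" for i
  proof -
    have "hs ! (i - 1) \<in> set hs"
      using that by auto
    then show ?thesis
      using feasible that unfolding x_def by (auto intro: someI_ex)
  qed
  then have "x \<in> seq_paths x0 hs"
    by (simp add: seq_paths_def x_def)
  then show "path_cost hs ` seq_paths x0 hs \<noteq> {}"
    by blast
next
  fix s
  assume "s \<in> path_cost hs ` seq_paths x0 hs"
  then obtain x where s: "s = path_cost hs x" and "x 0 = x0"
    and path: "\<forall>i\<in>{1..length hs}. (hs ! (i - 1)) (x i) = 1"
    by (auto simp: seq_paths_def)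
  have "last hs (x (length hs)) = 1"
    using path[rule_format, of "length hs"] \<open>hs \<noteq> []\<close> by (auto simp: last_conv_nth Suc_le_eq)
  then have "c \<le> cost x0 (x (length hs))"
    by (rule assms(3))
  also have "\<dots> \<le> s"
    using cost_le_path_cost[of x hs] \<open>x 0 = x0\<close> s by simp
  finally show "c \<le> s" .
qed

lemma seq_cost_lin_clf_last_ge:
  assumes "hs \<noteq> []" and "\<forall>h\<in>set hs. \<exists>z. h z = 1" and "last hs = lin_clf w b"
  shows "(b - w \<bullet> x0) / norm w \<le> seq_cost x0 hs"
proof (rule seq_cost_ge[OF assms(1,2)])
  fix z
  assume "last hs z = 1"
  then have "b - w \<bullet> x0 \<le> norm w * cost x0 z"
    using assms(3) by (simp add: lin_clf_accept_cost_ge)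
  then show "(b - w \<bullet> x0) / norm w \<le> cost x0 z"
    by (cases "w = 0") (simp_all add: cost_nonneg divide_le_eq mult.commute)
qed

lemma inner_vec2: "(a::real^2) \<bullet> b = a$1 * b$1 + a$2 * b$2"
  by (simp add: inner_vec_def sum_2)

definition example_clfs :: "real \<Rightarrow> (real^2 \<Rightarrow> nat) list" where
  "example_clfs K = [lin_clf (vector [1, 0]) 0, lin_clf (vector [-K, 1]) 1]"

lemma example_clfs_accept_all:
  "(\<forall>h\<in>set (example_clfs K). h z = 1) \<longleftrightarrow> 0 \<le> z$1 \<and> 1 \<le> z$2 - K * z$1"
  by (simp add: example_clfs_def lin_clf_def inner_vec2)

lemma example_clfs_feasible: "\<exists>z. \<forall>h\<in>set (example_clfs K). h z = 1"
  by (rule exI[where x = "vector [0, 1]"]) (simp only: example_clfs_accept_all, simp)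

lemma example_conj_cost_ge:
  assumes "0 \<le> K"
  shows "1 \<le> conj_cost 0 (example_clfs K)"
proof (rule conj_cost_ge[OF example_clfs_feasible])
  fix z :: "real^2"
  assume "\<forall>h\<in>set (example_clfs K). h z = 1"
  then have "0 \<le> z$1" and "1 \<le> z$2 - K * z$1"
    unfolding example_clfs_accept_all by simp_all
  then have "1 \<le> z$2"
    using assms by (smt (verit) mult_nonneg_nonneg)
  also have "\<dots> \<le> norm z"
    using component_le_norm_cart[of z 2] by simp
  finally show "1 \<le> cost 0 z"
    by (simp add: cost_def)
qed

lemma example_seq_cost_le:
  assumes "0 < K"
  shows "seq_cost 0 (example_clfs K) \<le> 1 / K"
proof -
  define q :: "real^2" where "q = vector [-1/K, 0]"
  define x :: "nat \<Rightarrow> real^2" where "x i = (if i = 2 then q else 0)" for i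
  have "i \<in> {1..2} \<Longrightarrow> i = 1 \<or> i = (2::nat)" for i
    by auto
  then have "x \<in> seq_paths 0 (example_clfs K)"
    using assms by (auto simp: seq_paths_def example_clfs_def x_def q_def lin_clf_def inner_vec2)
  then have "seq_cost 0 (example_clfs K) \<le> path_cost (example_clfs K) x"
    by (rule seq_cost_le)
  also have "\<dots> = norm q"
    by (simp add: path_cost_def example_clfs_def x_def cost_def)
  also have "\<dots> = 1 / K"
    using assms by (simp add: q_def norm_vec_def L2_set_def sum_2)
  finally show ?thesis .
qed

lemma example_seq_cost_pos: "0 < seq_cost 0 (example_clfs K)"
proof -
  have "\<forall>h\<in>set (example_clfs K). \<exists>z. h z = 1"
    using example_clfs_feasible by blast
  then have "(1 - (vector [-K, 1] :: real^2) \<bullet> 0) / norm (vector [-K, 1] :: real^2)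
      \<le> seq_cost 0 (example_clfs K)"
    by (rule seq_cost_lin_clf_last_ge[rotated]) (simp_all add: example_clfs_def)
  moreover have "0 < norm (vector [-K, 1] :: real^2)"
    by (metis vector_2(2) zero_index zero_neq_one zero_less_norm_iff)
  ultimately show ?thesis
    by (metis divide_pos_pos inner_zero_right diff_zero less_le_trans zero_less_one)
qed

theorem mainTheorem12:
  fixes M :: real
  assumes "M > 0"
  shows "\<exists>(w1::real^2) b1 (w2::real^2) b2 (x0::real^2).
           {z. lin_clf w1 b1 z = 1 \<and> lin_clf w2 b2 z = 1} \<noteq> {} \<and>
           conj_cost x0 [lin_clf w1 b1, lin_clf w2 b2] / seq_cost x0 [lin_clf w1 b1, lin_clf w2 b2] \<ge> M"
proof -
  have conj: "1 \<le> conj_cost 0 (example_clfs M)"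
    using assms by (simp add: example_conj_cost_ge)
  have "M = 1 / (1 / M)"
    by simp
  also have "\<dots> \<le> conj_cost 0 (example_clfs M) / seq_cost 0 (example_clfs M)"
    using conj example_seq_cost_le example_seq_cost_pos assms by (intro frac_le) auto
  finally have "M \<le> conj_cost 0 (example_clfs M) / seq_cost 0 (example_clfs M)" .
  moreover have "{z. lin_clf (vector [1, 0] :: real^2) 0 z = 1 \<and> lin_clf (vector [-M, 1]) 1 z = 1} \<noteq> {}"
    using example_clfs_feasible[of M] by (simp add: example_clfs_def)
  ultimately show ?thesis
    unfolding example_clfs_def by blast
qed

end
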